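(* Let $R$ be a commutative ring and $(A,d)$ a differential graded $R$-algebra such that every dg-simple left dg-module over $(A,d)$ is acyclic. Then every left dg-module over $(A,d)$ of finite dg-composition length is acyclic. In particular, if $(A,d)$, as a left dg-module over itself, has finite dg-composition length, then $(A,d)$ is acyclic.
   Context: A differential graded (dg) $R$-algebra $(A,d)$ is a $\mathbb{Z}$-graded $R$-algebra $A$ with an $R$-linear degree-$1$ endomorphism $d$, $d^2=0$, $d(ab)=d(a)b+(-1)^{|a|}a\,d(b)$ for homogeneous $a,b$. A left dg-module $(M,\delta)$ is a graded left $A$-module with a degree-$1$ map $\delta$, $\delta^2=0$, $\delta(am)=d(a)m+(-1)^{|a|}a\,\delta(m)$; dg-submodules are graded submodules stable under $\delta$; $(S,\delta)$ is dg-simple if $S\neq0$ and its only dg-submodules are $0,S$. A dg-module has finite dg-composition length $n$ if it has a chain of dg-submodules $0=M_0\subset M_1\subset\dots\subset M_n=M$ with each $M_i/M_{i-1}$ dg-simple. Acyclic means the homology $\ker\delta/\operatorname{im}\delta$ vanishes. *)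

theory Defs
  imports "HOL-Algebra.Module" "HOL-Algebra.AbelCoset" "HOL-Algebra.RingHom"
begin

text \<open>The underlying additive group is the direct sum of the components:
  every element is uniquely a finite sum of homogeneous components.\<close>

definition graded_decomp :: "('m, 'b) ring_scheme \<Rightarrow> (int \<Rightarrow> 'm set) \<Rightarrow> bool" where
  "graded_decomp M gr \<longleftrightarrow>
     (\<forall>x \<in> carrier M. \<exists>!c. (\<forall>n. c n \<in> gr n) \<and> finite {n. c n \<noteq> \<zero>\<^bsub>M\<^esub>}
                           \<and> x = finsum M c {n. c n \<noteq> \<zero>\<^bsub>M\<^esub>})"

definition sgn_smult :: "('m, 'b) ring_scheme \<Rightarrow> int \<Rightarrow> 'm \<Rightarrow> 'm" where
  "sgn_smult M i x = (if even i then x else \<ominus>\<^bsub>M\<^esub> x)"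

definition graded_alg :: "'r ring \<Rightarrow> ('r \<Rightarrow> 'a) \<Rightarrow> 'a ring \<Rightarrow> (int \<Rightarrow> 'a set) \<Rightarrow> bool" where
  "graded_alg R alg A Agr \<longleftrightarrow>
     cring R \<and> ring A \<and> alg \<in> ring_hom R A
     \<and> (\<forall>r \<in> carrier R. \<forall>a \<in> carrier A. alg r \<otimes>\<^bsub>A\<^esub> a = a \<otimes>\<^bsub>A\<^esub> alg r)
     \<and> (\<forall>n. additive_subgroup (Agr n) A)
     \<and> (\<forall>n. \<forall>r \<in> carrier R. \<forall>a \<in> Agr n. alg r \<otimes>\<^bsub>A\<^esub> a \<in> Agr n)
     \<and> (\<forall>i j. \<forall>a \<in> Agr i. \<forall>b \<in> Agr j. a \<otimes>\<^bsub>A\<^esub> b \<in> Agr (i + j))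
     \<and> graded_decomp A Agr"

definition dg_alg :: "'r ring \<Rightarrow> ('r \<Rightarrow> 'a) \<Rightarrow> 'a ring \<Rightarrow> (int \<Rightarrow> 'a set) \<Rightarrow> ('a \<Rightarrow> 'a) \<Rightarrow> bool" where
  "dg_alg R alg A Agr d \<longleftrightarrow>
     graded_alg R alg A Agr
     \<and> d \<in> carrier A \<rightarrow> carrier A
     \<and> (\<forall>a \<in> carrier A. \<forall>b \<in> carrier A. d (a \<oplus>\<^bsub>A\<^esub> b) = d a \<oplus>\<^bsub>A\<^esub> d b)
     \<and> (\<forall>r \<in> carrier R. \<forall>a \<in> carrier A. d (alg r \<otimes>\<^bsub>A\<^esub> a) = alg r \<otimes>\<^bsub>A\<^esub> d a)
     \<and> (\<forall>n. d ` Agr n \<subseteq> Agr (n + 1))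
     \<and> (\<forall>a \<in> carrier A. d (d a) = \<zero>\<^bsub>A\<^esub>)
     \<and> (\<forall>i j. \<forall>a \<in> Agr i. \<forall>b \<in> Agr j.
           d (a \<otimes>\<^bsub>A\<^esub> b) = d a \<otimes>\<^bsub>A\<^esub> b \<oplus>\<^bsub>A\<^esub> sgn_smult A i (a \<otimes>\<^bsub>A\<^esub> d b))"

text \<open>Data of a (candidate) graded left module with differential: carrier, additive group
  structure (fields zero, add of the ring record; mult/one unused), scalar action of A,
  grading and differential.\<close>
record ('a, 'm) dgmod = "('a, 'm) module" +
  mgr :: "int \<Rightarrow> 'm set"
  mdelta :: "'m \<Rightarrow> 'm"

definition dg_module :: "'a ring \<Rightarrow> (int \<Rightarrow> 'a set) \<Rightarrow> ('a \<Rightarrow> 'a) \<Rightarrow> ('a, 'm) dgmod \<Rightarrow> bool" where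
  "dg_module A Agr d M \<longleftrightarrow>
     abelian_group M
     \<and> (\<forall>a \<in> carrier A. \<forall>m \<in> carrier M. a \<odot>\<^bsub>M\<^esub> m \<in> carrier M)
     \<and> (\<forall>a \<in> carrier A. \<forall>b \<in> carrier A. \<forall>m \<in> carrier M.
           (a \<oplus>\<^bsub>A\<^esub> b) \<odot>\<^bsub>M\<^esub> m = a \<odot>\<^bsub>M\<^esub> m \<oplus>\<^bsub>M\<^esub> b \<odot>\<^bsub>M\<^esub> m)
     \<and> (\<forall>a \<in> carrier A. \<forall>m \<in> carrier M. \<forall>n \<in> carrier M.
           a \<odot>\<^bsub>M\<^esub> (m \<oplus>\<^bsub>M\<^esub> n) = a \<odot>\<^bsub>M\<^esub> m \<oplus>\<^bsub>M\<^esub> a \<odot>\<^bsub>M\<^esub> n)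
     \<and> (\<forall>a \<in> carrier A. \<forall>b \<in> carrier A. \<forall>m \<in> carrier M.
           (a \<otimes>\<^bsub>A\<^esub> b) \<odot>\<^bsub>M\<^esub> m = a \<odot>\<^bsub>M\<^esub> (b \<odot>\<^bsub>M\<^esub> m))
     \<and> (\<forall>m \<in> carrier M. \<one>\<^bsub>A\<^esub> \<odot>\<^bsub>M\<^esub> m = m)
     \<and> (\<forall>n. additive_subgroup (mgr M n) M)
     \<and> (\<forall>i j. \<forall>a \<in> Agr i. \<forall>m \<in> mgr M j. a \<odot>\<^bsub>M\<^esub> m \<in> mgr M (i + j))
     \<and> graded_decomp M (mgr M)
     \<and> mdelta M \<in> carrier M \<rightarrow> carrier M
     \<and> (\<forall>m \<in> carrier M. \<forall>n \<in> carrier M. mdelta M (m \<oplus>\<^bsub>M\<^esub> n) = mdelta M m \<oplus>\<^bsub>M\<^esub> mdelta M n)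
     \<and> (\<forall>n. mdelta M ` mgr M n \<subseteq> mgr M (n + 1))
     \<and> (\<forall>m \<in> carrier M. mdelta M (mdelta M m) = \<zero>\<^bsub>M\<^esub>)
     \<and> (\<forall>i. \<forall>a \<in> Agr i. \<forall>m \<in> carrier M.
           mdelta M (a \<odot>\<^bsub>M\<^esub> m) = d a \<odot>\<^bsub>M\<^esub> m \<oplus>\<^bsub>M\<^esub> sgn_smult M i (a \<odot>\<^bsub>M\<^esub> mdelta M m))"

text \<open>dg-submodules: graded submodules (containing all homogeneous components of their
  elements) stable under the differential.\<close>
definition dg_submod :: "'a ring \<Rightarrow> ('a, 'm) dgmod \<Rightarrow> 'm set \<Rightarrow> bool" where
  "dg_submod A M N \<longleftrightarrow>
     additive_subgroup N M
     \<and> (\<forall>a \<in> carrier A. \<forall>m \<in> N. a \<odot>\<^bsub>M\<^esub> m \<in> N)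
     \<and> (\<forall>m \<in> N. \<forall>c. ((\<forall>n. c n \<in> mgr M n) \<and> finite {n. c n \<noteq> \<zero>\<^bsub>M\<^esub>}
                        \<and> m = finsum M c {n. c n \<noteq> \<zero>\<^bsub>M\<^esub>}) \<longrightarrow> (\<forall>n. c n \<in> N))
     \<and> mdelta M ` N \<subseteq> N"

definition dg_simple :: "'a ring \<Rightarrow> (int \<Rightarrow> 'a set) \<Rightarrow> ('a \<Rightarrow> 'a) \<Rightarrow> ('a, 'm) dgmod \<Rightarrow> bool" where
  "dg_simple A Agr d S \<longleftrightarrow>
     dg_module A Agr d S \<and> carrier S \<noteq> {\<zero>\<^bsub>S\<^esub>}
     \<and> (\<forall>N. dg_submod A S N \<longrightarrow> N = {\<zero>\<^bsub>S\<^esub>} \<or> N = carrier S)"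

definition dg_acyclic :: "('a, 'm) dgmod \<Rightarrow> bool" where
  "dg_acyclic M \<longleftrightarrow>
     (\<forall>m \<in> carrier M. mdelta M m = \<zero>\<^bsub>M\<^esub> \<longrightarrow> (\<exists>x \<in> carrier M. m = mdelta M x))"

definition dg_restrict :: "('a, 'm) dgmod \<Rightarrow> 'm set \<Rightarrow> ('a, 'm) dgmod" where
  "dg_restrict M N = M\<lparr>carrier := N, mgr := (\<lambda>n. mgr M n \<inter> N)\<rparr>"

definition qcoset :: "('a, 'm) dgmod \<Rightarrow> 'm set \<Rightarrow> 'm \<Rightarrow> 'm set" where
  "qcoset M N m = {x \<in> carrier M. \<exists>n \<in> N. x = m \<oplus>\<^bsub>M\<^esub> n}"

definition qrep :: "'m set \<Rightarrow> 'm" where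
  "qrep Z = (SOME x. x \<in> Z)"

definition dg_quotient :: "('a, 'm) dgmod \<Rightarrow> 'm set \<Rightarrow> ('a, 'm set) dgmod" where
  "dg_quotient M N =
     \<lparr>carrier = qcoset M N ` carrier M,
      mult = (\<lambda>Z Y. qcoset M N (qrep Z \<oplus>\<^bsub>M\<^esub> qrep Y)),
      one = qcoset M N \<zero>\<^bsub>M\<^esub>,
      zero = qcoset M N \<zero>\<^bsub>M\<^esub>,
      add = (\<lambda>Z Y. qcoset M N (qrep Z \<oplus>\<^bsub>M\<^esub> qrep Y)),
      smult = (\<lambda>a Z. qcoset M N (a \<odot>\<^bsub>M\<^esub> qrep Z)),
      mgr = (\<lambda>n. qcoset M N ` mgr M n),
      mdelta = (\<lambda>Z. qcoset M N (mdelta M (qrep Z)))\<rparr>"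

definition finite_dg_length :: "'a ring \<Rightarrow> (int \<Rightarrow> 'a set) \<Rightarrow> ('a \<Rightarrow> 'a) \<Rightarrow> ('a, 'm) dgmod \<Rightarrow> bool" where
  "finite_dg_length A Agr d M \<longleftrightarrow>
     (\<exists>(n::nat) Ms. Ms 0 = {\<zero>\<^bsub>M\<^esub>} \<and> Ms n = carrier M
        \<and> (\<forall>i \<le> n. dg_submod A M (Ms i))
        \<and> (\<forall>i < n. Ms i \<subseteq> Ms (Suc i)
                   \<and> dg_simple A Agr d (dg_quotient (dg_restrict M (Ms (Suc i))) (Ms i))))"

definition regular_dgmod :: "'a ring \<Rightarrow> (int \<Rightarrow> 'a set) \<Rightarrow> ('a \<Rightarrow> 'a) \<Rightarrow> ('a, 'a) dgmod" where
  "regular_dgmod A Agr d =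
     \<lparr>carrier = carrier A, mult = mult A, one = one A, zero = zero A, add = add A,
      smult = mult A, mgr = Agr, mdelta = d\<rparr>"

end

theory Submission
  imports Defs
begin

text \<open>Induction along the composition series \<open>0 = M\<^sub>0 \<subseteq> \<dots> \<subseteq> M\<^sub>n = M\<close>.
  Each step is a short exact sequence \<open>0 \<rightarrow> M\<^sub>i \<rightarrow> M\<^bsub>i+1\<^esub> \<rightarrow> M\<^bsub>i+1\<^esub>/M\<^sub>i \<rightarrow> 0\<close> whose
  quotient is dg-simple, hence acyclic; and an extension of acyclic complexes is acyclic:
  a cycle \<open>m\<close> of \<open>M\<^bsub>i+1\<^esub>\<close> becomes a boundary \<open>\<delta>x\<close> modulo \<open>M\<^sub>i\<close>, and the cycle
  \<open>m - \<delta>x\<close> of \<open>M\<^sub>i\<close> is a boundary \<open>\<delta>y\<close>, so \<open>m = \<delta>(x + y)\<close>.\<close>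

section \<open>Differential groups\<close>

lemma (in abelian_group) additive_subgroupI':
  assumes "H \<subseteq> carrier G" "H \<noteq> {}" "\<And>a. a \<in> H \<Longrightarrow> \<ominus> a \<in> H"
    "\<And>a b. a \<in> H \<Longrightarrow> b \<in> H \<Longrightarrow> a \<oplus> b \<in> H"
  shows "additive_subgroup H G"
  by (rule additive_subgroupI, rule add.subgroupI) (use assms in \<open>simp_all add: a_inv_def\<close>)

text \<open>Acyclicity involves only the additive group and the differential, so the induction is
  carried out for these structures; the regular module need not be shown to be a dg-module.\<close>

locale diff_group = abelian_group M for M :: "('a, 'm) dgmod" (structure) +
  assumes mdelta_closed [intro, simp]: "x \<in> carrier M \<Longrightarrow> mdelta M x \<in> carrier M"
    and mdelta_add: "x \<in> carrier M \<Longrightarrow> y \<in> carrier M \<Longrightarrow> mdelta M (x \<oplus> y) = mdelta M x \<oplus> mdelta M y"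
    and mdelta_mdelta [simp]: "x \<in> carrier M \<Longrightarrow> mdelta M (mdelta M x) = \<zero>"

lemma (in diff_group) mdelta_zero [simp]: "mdelta M \<zero> = \<zero>"
  using mdelta_add[of \<zero> \<zero>] by simp

lemma dg_module_diff_group: "dg_module A Agr d M \<Longrightarrow> diff_group M"
  unfolding dg_module_def diff_group_def diff_group_axioms_def by auto

section \<open>Transport of dg-modules\<close>

definition homogeneous_decomp :: "('m, 'b) ring_scheme \<Rightarrow> (int \<Rightarrow> 'm set) \<Rightarrow> (int \<Rightarrow> 'm) \<Rightarrow> 'm \<Rightarrow> bool" where
  "homogeneous_decomp M gr c x \<longleftrightarrow>
     (\<forall>n. c n \<in> gr n) \<and> finite {n. c n \<noteq> \<zero>\<^bsub>M\<^esub>} \<and> x = finsum M c {n. c n \<noteq> \<zero>\<^bsub>M\<^esub>}"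

lemma graded_decomp_iff: "graded_decomp M gr \<longleftrightarrow> (\<forall>x \<in> carrier M. \<exists>!c. homogeneous_decomp M gr c x)"
  unfolding graded_decomp_def homogeneous_decomp_def ..

lemma dg_submod_iff:
  "dg_submod A M N \<longleftrightarrow> additive_subgroup N M \<and> (\<forall>a \<in> carrier A. \<forall>m \<in> N. a \<odot>\<^bsub>M\<^esub> m \<in> N)
     \<and> (\<forall>m \<in> N. \<forall>c. homogeneous_decomp M (mgr M) c m \<longrightarrow> (\<forall>n. c n \<in> N)) \<and> mdelta M ` N \<subseteq> N"
  unfolding dg_submod_def homogeneous_decomp_def ..

text \<open>The hypothesis on dg-simple modules is available only for carrier type \<open>'m\<close>, whereas the
  quotient \<open>M\<^bsub>i+1\<^esub>/M\<^sub>i\<close> is carried by cosets. Transporting it along \<^const>\<open>qrep\<close>, which has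
  the left inverse \<^const>\<open>qcoset\<close>, yields an isomorphic copy on \<open>'m\<close>.\<close>

definition dgmod_transport :: "('a, 'b) dgmod \<Rightarrow> ('b \<Rightarrow> 'c) \<Rightarrow> ('c \<Rightarrow> 'b) \<Rightarrow> ('a, 'c) dgmod" where
  "dgmod_transport Q h g =
     \<lparr>carrier = h ` carrier Q, mult = (\<lambda>x y. h (g x \<otimes>\<^bsub>Q\<^esub> g y)), one = h \<one>\<^bsub>Q\<^esub>,
      zero = h \<zero>\<^bsub>Q\<^esub>, add = (\<lambda>x y. h (g x \<oplus>\<^bsub>Q\<^esub> g y)), smult = (\<lambda>a x. h (a \<odot>\<^bsub>Q\<^esub> g x)),
      mgr = (\<lambda>n. h ` mgr Q n), mdelta = (\<lambda>x. h (mdelta Q (g x)))\<rparr>"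

locale dg_transport =
  fixes A :: "'a ring" and Agr :: "int \<Rightarrow> 'a set" and d :: "'a \<Rightarrow> 'a"
    and Q :: "('a, 'b) dgmod" and h :: "'b \<Rightarrow> 'c" and g :: "'c \<Rightarrow> 'b"
  assumes dg_module: "dg_module A Agr d Q"
    and left_inverse [simp]: "\<And>X. X \<in> carrier Q \<Longrightarrow> g (h X) = X"
    and grading_closed: "\<And>i. Agr i \<subseteq> carrier A"
    and d_closed: "\<And>a. a \<in> carrier A \<Longrightarrow> d a \<in> carrier A"
begin

sublocale Q: diff_group Q
  by (rule dg_module_diff_group[OF dg_module])

abbreviation S :: "('a, 'c) dgmod" where "S \<equiv> dgmod_transport Q h g"

lemma smult_closed: "a \<in> carrier A \<Longrightarrow> X \<in> carrier Q \<Longrightarrow> a \<odot>\<^bsub>Q\<^esub> X \<in> carrier Q"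
  using dg_module by (simp add: dg_module_def)

lemma mgr_subset: "mgr Q n \<subseteq> carrier Q"
proof -
  from dg_module have "additive_subgroup (mgr Q n) Q"
    by (simp add: dg_module_def)
  then show ?thesis
    by (rule additive_subgroup.a_subset)
qed

lemma inj_on_h: "inj_on h (carrier Q)"
  by (rule inj_on_inverseI) (rule left_inverse)

lemma h_eq_iff [simp]: "X \<in> carrier Q \<Longrightarrow> Y \<in> carrier Q \<Longrightarrow> h X = h Y \<longleftrightarrow> X = Y"
  by (rule inj_on_eq_iff[OF inj_on_h])

lemma h_mem_mgr_iff: "X \<in> carrier Q \<Longrightarrow> h X \<in> h ` mgr Q n \<longleftrightarrow> X \<in> mgr Q n"
  by (rule inj_on_image_mem_iff[OF inj_on_h _ mgr_subset])

lemma transport_simps [simp]: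
  "carrier S = h ` carrier Q" "\<zero>\<^bsub>S\<^esub> = h \<zero>\<^bsub>Q\<^esub>" "mgr S n = h ` mgr Q n"
  "X \<in> carrier Q \<Longrightarrow> Y \<in> carrier Q \<Longrightarrow> h X \<oplus>\<^bsub>S\<^esub> h Y = h (X \<oplus>\<^bsub>Q\<^esub> Y)"
  "X \<in> carrier Q \<Longrightarrow> a \<odot>\<^bsub>S\<^esub> h X = h (a \<odot>\<^bsub>Q\<^esub> X)"
  "X \<in> carrier Q \<Longrightarrow> mdelta S (h X) = h (mdelta Q X)"
  by (simp_all add: dgmod_transport_def)

lemma transport_abelian_group: "abelian_group S"
proof (rule abelian_groupI)
  fix x y z assume "x \<in> carrier S" "y \<in> carrier S" "z \<in> carrier S"
  then obtain X Y Z where "X \<in> carrier Q" "Y \<in> carrier Q" "Z \<in> carrier Q" "x = h X" "y = h Y" "z = h Z"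
    by auto
  then show "x \<oplus>\<^bsub>S\<^esub> y \<in> carrier S" "x \<oplus>\<^bsub>S\<^esub> y \<oplus>\<^bsub>S\<^esub> z = x \<oplus>\<^bsub>S\<^esub> (y \<oplus>\<^bsub>S\<^esub> z)"
    "x \<oplus>\<^bsub>S\<^esub> y = y \<oplus>\<^bsub>S\<^esub> x"
    by (simp_all add: Q.a_ac)
next
  fix x assume "x \<in> carrier S"
  then obtain X where X: "X \<in> carrier Q" "x = h X"
    by auto
  then show "\<zero>\<^bsub>S\<^esub> \<oplus>\<^bsub>S\<^esub> x = x"
    by simp
  from X have "h (\<ominus>\<^bsub>Q\<^esub> X) \<in> carrier S" "h (\<ominus>\<^bsub>Q\<^esub> X) \<oplus>\<^bsub>S\<^esub> x = \<zero>\<^bsub>S\<^esub>"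
    by (simp_all add: Q.l_neg)
  then show "\<exists>y\<in>carrier S. y \<oplus>\<^bsub>S\<^esub> x = \<zero>\<^bsub>S\<^esub>"
    by blast
qed simp

interpretation S: abelian_group S
  by (rule transport_abelian_group)

lemma transport_minus [simp]: "X \<in> carrier Q \<Longrightarrow> \<ominus>\<^bsub>S\<^esub> h X = h (\<ominus>\<^bsub>Q\<^esub> X)"
  by (rule S.minus_equality) (auto simp: Q.l_neg)

lemma transport_finsum:
  "finite I \<Longrightarrow> c \<in> I \<rightarrow> carrier Q \<Longrightarrow> finsum S (\<lambda>i. h (c i)) I = h (finsum Q c I)"
proof (induction I rule: finite_induct)
  case (insert i I)
  then have "finsum S (\<lambda>i. h (c i)) (insert i I) = h (c i) \<oplus>\<^bsub>S\<^esub> h (finsum Q c I)"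
    by (subst S.finsum_insert) auto
  with insert show ?case by (simp add: Q.finsum_insert Q.finsum_closed)
qed simp

lemma transport_memD:
  assumes "y \<in> h ` C" "C \<subseteq> carrier Q"
  shows "g y \<in> C" "h (g y) = y"
  using assms by auto

lemma transport_homogeneous_decomp:
  assumes c: "\<And>n. c n \<in> carrier Q" and X: "X \<in> carrier Q"
  shows "homogeneous_decomp S (mgr S) (\<lambda>n. h (c n)) (h X) \<longleftrightarrow> homogeneous_decomp Q (mgr Q) c X"
proof -
  have support: "{n. h (c n) \<noteq> \<zero>\<^bsub>S\<^esub>} = {n. c n \<noteq> \<zero>\<^bsub>Q\<^esub>}"
    using c by simp
  have "h X = finsum S (\<lambda>n. h (c n)) {n. c n \<noteq> \<zero>\<^bsub>Q\<^esub>} \<longleftrightarrow> X = finsum Q c {n. c n \<noteq> \<zero>\<^bsub>Q\<^esub>}"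
    if "finite {n. c n \<noteq> \<zero>\<^bsub>Q\<^esub>}"
    using that c X by (simp add: transport_finsum Q.finsum_closed)
  then show ?thesis
    unfolding homogeneous_decomp_def support using c by (auto simp: h_mem_mgr_iff)
qed

lemma transport_graded_decomp: "graded_decomp S (mgr S)"
  unfolding graded_decomp_iff
proof
  fix x assume "x \<in> carrier S"
  then obtain X where X: "X \<in> carrier Q" "x = h X" by auto
  from dg_module have "graded_decomp Q (mgr Q)"
    by (simp add: dg_module_def)
  with X(1) have "\<exists>!c. homogeneous_decomp Q (mgr Q) c X"
    unfolding graded_decomp_iff by blast
  then obtain c where c: "homogeneous_decomp Q (mgr Q) c X"
    and c_unique: "\<And>c'. homogeneous_decomp Q (mgr Q) c' X \<Longrightarrow> c' = c"
    by blast
  have c_carrier: "c n \<in> carrier Q" for n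
    using c mgr_subset unfolding homogeneous_decomp_def by blast
  show "\<exists>!c. homogeneous_decomp S (mgr S) c x"
  proof
    show "homogeneous_decomp S (mgr S) (\<lambda>n. h (c n)) x"
      using c c_carrier X by (simp add: transport_homogeneous_decomp)
  next
    fix c' assume c': "homogeneous_decomp S (mgr S) c' x"
    then have "c' n \<in> h ` mgr Q n" for n
      by (simp add: homogeneous_decomp_def)
    note c'_mgr = transport_memD(1)[OF this mgr_subset]
      and c'_eq = transport_memD(2)[OF this mgr_subset]
    have "homogeneous_decomp Q (mgr Q) (\<lambda>n. g (c' n)) X"
      using c' c'_mgr mgr_subset X
      by (subst transport_homogeneous_decomp[symmetric]) (auto simp: c'_eq)
    then have "(\<lambda>n. g (c' n)) = c"
      by (rule c_unique)
    then show "c' = (\<lambda>n. h (c n))"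
      using c'_eq by auto
  qed
qed

lemma transport_additive_subgroup:
  assumes "additive_subgroup H Q"
  shows "additive_subgroup (h ` H) S"
proof -
  interpret H: additive_subgroup H Q by fact
  have H_carrier: "X \<in> H \<Longrightarrow> X \<in> carrier Q" for X
    using H.a_subset by blast
  show ?thesis
  proof (rule S.additive_subgroupI')
    show "h ` H \<subseteq> carrier S"
      using H_carrier by auto
    show "h ` H \<noteq> {}"
      using H.zero_closed by blast
    show "\<ominus>\<^bsub>S\<^esub> y \<in> h ` H" if "y \<in> h ` H" for y
      using that H_carrier by auto
    show "y \<oplus>\<^bsub>S\<^esub> z \<in> h ` H" if "y \<in> h ` H" "z \<in> h ` H" for y z
      using that H_carrier by auto
  qed
qed

lemma transport_dg_module: "dg_module A Agr d S"
proof -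
  have [simp]: "a \<in> Agr i \<Longrightarrow> a \<in> carrier A" for a i
    using grading_closed by blast
  have [simp]: "X \<in> mgr Q n \<Longrightarrow> X \<in> carrier Q" for X n
    using mgr_subset by blast
  note Q = dg_module[unfolded dg_module_def]
  note [simp] = smult_closed
  show ?thesis
    unfolding dg_module_def
  proof (intro conjI)
    show "abelian_group S"
      by (rule transport_abelian_group)
    show "graded_decomp S (mgr S)"
      by (rule transport_graded_decomp)
    show "\<forall>n. additive_subgroup (mgr S n) S"
      using Q by (simp add: transport_additive_subgroup)
    show "\<forall>i. \<forall>a\<in>Agr i. \<forall>m\<in>carrier S.
        mdelta S (a \<odot>\<^bsub>S\<^esub> m) = d a \<odot>\<^bsub>S\<^esub> m \<oplus>\<^bsub>S\<^esub> sgn_smult S i (a \<odot>\<^bsub>S\<^esub> mdelta S m)"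
      using Q d_closed by (simp add: sgn_smult_def)
  qed (use Q in \<open>simp_all add: image_subset_iff Pi_iff\<close>)
qed

lemma transport_dg_submod_vimage:
  assumes N: "dg_submod A S N"
  shows "dg_submod A Q (carrier Q \<inter> h -` N)"
  unfolding dg_submod_iff
proof (intro conjI ballI allI impI)
  interpret N: additive_subgroup N S
    using N unfolding dg_submod_def by blast
  have "h (\<ominus>\<^bsub>Q\<^esub> X) \<in> N" if "X \<in> carrier Q" "h X \<in> N" for X
    using N.a_inv_closed[OF that(2)] that(1) by simp
  then show "additive_subgroup (carrier Q \<inter> h -` N) Q"
    by (intro Q.additive_subgroupI') (auto simp flip: transport_simps)
next
  fix a X assume "a \<in> carrier A" "X \<in> carrier Q \<inter> h -` N"
  with N show "a \<odot>\<^bsub>Q\<^esub> X \<in> carrier Q \<inter> h -` N"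
    unfolding dg_submod_def by (auto simp: smult_closed simp flip: transport_simps)
next
  fix X c n assume X: "X \<in> carrier Q \<inter> h -` N" and c: "homogeneous_decomp Q (mgr Q) c X"
  have c_carrier: "c k \<in> carrier Q" for k
    using c mgr_subset unfolding homogeneous_decomp_def by blast
  with X c have "homogeneous_decomp S (mgr S) (\<lambda>k. h (c k)) (h X)"
    by (simp add: transport_homogeneous_decomp)
  with N X have "h (c n) \<in> N"
    unfolding dg_submod_iff by blast
  with c_carrier show "c n \<in> carrier Q \<inter> h -` N"
    by blast
next
  show "mdelta Q ` (carrier Q \<inter> h -` N) \<subseteq> carrier Q \<inter> h -` N"
    using N unfolding dg_submod_def by (auto simp flip: transport_simps)
qed

lemma transport_dg_simple:
  assumes Q_simple: "dg_simple A Agr d Q"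
  shows "dg_simple A Agr d S"
  unfolding dg_simple_def
proof (intro conjI allI impI)
  show "dg_module A Agr d S"
    by (rule transport_dg_module)
  from Q_simple have "carrier Q \<noteq> {\<zero>\<^bsub>Q\<^esub>}"
    by (simp add: dg_simple_def)
  then obtain X where "X \<in> carrier Q" "X \<noteq> \<zero>\<^bsub>Q\<^esub>"
    by blast
  then show "carrier S \<noteq> {\<zero>\<^bsub>S\<^esub>}"
    by (metis Q.zero_closed h_eq_iff image_eqI singletonD transport_simps(1,2))
next
  fix N assume N: "dg_submod A S N"
  then have "additive_subgroup N S"
    by (simp add: dg_submod_def)
  then have "N \<subseteq> carrier S"
    by (rule additive_subgroup.a_subset)
  then have N_eq: "N = h ` (carrier Q \<inter> h -` N)"
    by auto
  from Q_simple transport_dg_submod_vimage[OF N]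
  have "carrier Q \<inter> h -` N = {\<zero>\<^bsub>Q\<^esub>} \<or> carrier Q \<inter> h -` N = carrier Q"
    by (simp add: dg_simple_def)
  then show "N = {\<zero>\<^bsub>S\<^esub>} \<or> N = carrier S"
    by (subst (1 2) N_eq) auto
qed

lemma transport_acyclic_iff: "dg_acyclic S \<longleftrightarrow> dg_acyclic Q"
  by (simp add: dg_acyclic_def)
end

section \<open>Extensions of acyclic differential groups\<close>

lemma dg_restrict_simps [simp]:
  "carrier (dg_restrict M N) = N" "add (dg_restrict M N) = add M" "zero (dg_restrict M N) = zero M"
  "mdelta (dg_restrict M N) = mdelta M"
  by (simp_all add: dg_restrict_def)

lemma dg_restrict_dg_restrict: "H \<subseteq> K \<Longrightarrow> dg_restrict (dg_restrict M K) H = dg_restrict M H"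
  unfolding dg_restrict_def by (simp add: Int_assoc Int_absorb1)

lemma quotient_simps:
  "carrier (dg_quotient M N) = qcoset M N ` carrier M" "\<zero>\<^bsub>dg_quotient M N\<^esub> = qcoset M N \<zero>\<^bsub>M\<^esub>"
  by (simp_all add: dg_quotient_def)

locale diff_subgroup = diff_group + additive_subgroup N M for N +
  assumes mdelta_subgroup: "x \<in> N \<Longrightarrow> mdelta M x \<in> N"

lemma (in diff_group) dg_submod_diff_subgroup: "dg_submod A M N \<Longrightarrow> diff_subgroup M N"
  by (simp add: dg_submod_def diff_subgroup_def diff_subgroup_axioms_def diff_group_axioms image_subset_iff)

context diff_subgroup
begin

lemma restrict_abelian_group: "abelian_group (dg_restrict M N)"
proof (rule abelian_groupI)
  fix x y z assume "x \<in> carrier (dg_restrict M N)" "y \<in> carrier (dg_restrict M N)"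
    "z \<in> carrier (dg_restrict M N)"
  then show "x \<oplus>\<^bsub>dg_restrict M N\<^esub> y \<in> carrier (dg_restrict M N)"
    "x \<oplus>\<^bsub>dg_restrict M N\<^esub> y \<oplus>\<^bsub>dg_restrict M N\<^esub> z = x \<oplus>\<^bsub>dg_restrict M N\<^esub> (y \<oplus>\<^bsub>dg_restrict M N\<^esub> z)"
    "x \<oplus>\<^bsub>dg_restrict M N\<^esub> y = y \<oplus>\<^bsub>dg_restrict M N\<^esub> x"
    by (simp_all add: a_ac)
next
  fix x assume x: "x \<in> carrier (dg_restrict M N)"
  then show "\<zero>\<^bsub>dg_restrict M N\<^esub> \<oplus>\<^bsub>dg_restrict M N\<^esub> x = x"
    by simp
  from x have "\<ominus> x \<in> N" "\<ominus> x \<oplus> x = \<zero>"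
    by (simp_all add: l_neg)
  then show "\<exists>y\<in>carrier (dg_restrict M N). y \<oplus>\<^bsub>dg_restrict M N\<^esub> x = \<zero>\<^bsub>dg_restrict M N\<^esub>"
    by auto
qed simp

lemma restrict_diff_group: "diff_group (dg_restrict M N)"
  unfolding diff_group_def diff_group_axioms_def
  using restrict_abelian_group by (simp add: mdelta_subgroup mdelta_add)

lemma restrict_minus: "x \<in> N \<Longrightarrow> \<ominus>\<^bsub>dg_restrict M N\<^esub> x = \<ominus> x"
  by (rule abelian_group.minus_equality[OF restrict_abelian_group]) (simp_all add: l_neg)

lemma restrict_diff_subgroup:
  assumes "diff_subgroup M H" "H \<subseteq> N"
  shows "diff_subgroup (dg_restrict M N) H"
proof -
  interpret H: diff_subgroup M H by fact
  interpret MN: diff_group "dg_restrict M N"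
    by (rule restrict_diff_group)
  have "additive_subgroup H (dg_restrict M N)"
  proof (rule MN.additive_subgroupI')
    show "H \<subseteq> carrier (dg_restrict M N)"
      using assms(2) by simp
    show "H \<noteq> {}"
      using H.zero_closed by blast
    show "\<ominus>\<^bsub>dg_restrict M N\<^esub> a \<in> H" if "a \<in> H" for a
      using that assms(2) by (auto simp: restrict_minus)
    show "a \<oplus>\<^bsub>dg_restrict M N\<^esub> b \<in> H" if "a \<in> H" "b \<in> H" for a b
      using that by simp
  qed
  then show ?thesis
    by (simp add: diff_subgroup_def diff_subgroup_axioms_def MN.diff_group_axioms H.mdelta_subgroup)
qed

lemma mem_qcoset_iff: "x \<in> carrier M \<Longrightarrow> y \<in> qcoset M N x \<longleftrightarrow> (\<exists>n\<in>N. y = x \<oplus> n)"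
  unfolding qcoset_def by auto

lemma mem_qcoset_self: "x \<in> carrier M \<Longrightarrow> x \<in> qcoset M N x"
  using zero_closed by (force simp: mem_qcoset_iff)

lemma qcoset_eq_l_coset: "x \<in> carrier M \<Longrightarrow> qcoset M N x = x <+ N"
  unfolding a_l_coset_def' by (auto simp: mem_qcoset_iff)

lemma qcoset_eq_iff:
  assumes "x \<in> carrier M" "y \<in> carrier M"
  shows "qcoset M N x = qcoset M N y \<longleftrightarrow> x \<in> qcoset M N y"
proof
  assume "qcoset M N x = qcoset M N y"
  with mem_qcoset_self[OF assms(1)] show "x \<in> qcoset M N y"
    by simp
next
  assume "x \<in> qcoset M N y"
  with assms have "y <+ N = x <+ N"
    by (intro a_l_repr_independence[OF _ assms(2) a_subgroup]) (simp add: qcoset_eq_l_coset)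
  with assms show "qcoset M N x = qcoset M N y"
    by (simp add: qcoset_eq_l_coset)
qed

lemma qrep_mem_qcoset: "x \<in> carrier M \<Longrightarrow> qrep (qcoset M N x) \<in> qcoset M N x"
  unfolding qrep_def by (rule someI) (rule mem_qcoset_self)

lemma quotient_qrep:
  assumes "Z \<in> carrier (dg_quotient M N)"
  shows "qrep Z \<in> carrier M" "qcoset M N (qrep Z) = Z"
proof -
  from assms obtain x where x: "x \<in> carrier M" "Z = qcoset M N x"
    by (auto simp: quotient_simps)
  then have qrep_mem: "qrep Z \<in> qcoset M N x"
    using qrep_mem_qcoset by simp
  then show qrep_carrier: "qrep Z \<in> carrier M"
    by (simp add: qcoset_def)
  from x qrep_mem qrep_carrier show "qcoset M N (qrep Z) = Z"
    by (simp add: qcoset_eq_iff)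
qed

lemma quotient_mdelta:
  assumes x: "x \<in> carrier M"
  shows "mdelta (dg_quotient M N) (qcoset M N x) = qcoset M N (mdelta M x)"
proof -
  from x obtain n where n: "n \<in> N" "qrep (qcoset M N x) = x \<oplus> n"
    using qrep_mem_qcoset mem_qcoset_iff by blast
  with x have "mdelta M (qrep (qcoset M N x)) = mdelta M x \<oplus> mdelta M n"
    by (simp add: mdelta_add)
  with x n mdelta_subgroup have "mdelta M (qrep (qcoset M N x)) \<in> qcoset M N (mdelta M x)"
    by (auto simp: mem_qcoset_iff)
  with x n have "qcoset M N (mdelta M (qrep (qcoset M N x))) = qcoset M N (mdelta M x)"
    by (simp add: qcoset_eq_iff)
  then show ?thesis
    by (simp add: dg_quotient_def)
qed

lemma acyclic_extension:
  assumes sub: "dg_acyclic (dg_restrict M N)" and quot: "dg_acyclic (dg_quotient M N)"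
  shows "dg_acyclic M"
  unfolding dg_acyclic_def
proof (intro ballI impI)
  fix m assume m: "m \<in> carrier M" and cycle: "mdelta M m = \<zero>"
  have "mdelta (dg_quotient M N) (qcoset M N m) = \<zero>\<^bsub>dg_quotient M N\<^esub>"
    using m cycle by (simp add: quotient_mdelta quotient_simps)
  moreover have "qcoset M N m \<in> carrier (dg_quotient M N)"
    using m by (simp add: quotient_simps)
  ultimately obtain Z where Z: "Z \<in> carrier (dg_quotient M N)"
    and "qcoset M N m = mdelta (dg_quotient M N) Z"
    using quot unfolding dg_acyclic_def by blast
  moreover define x where "x = qrep Z"
  ultimately have x: "x \<in> carrier M" and "qcoset M N m = qcoset M N (mdelta M x)"
    using quotient_qrep[OF Z] quotient_mdelta by metis+
  with m obtain n where n: "n \<in> N" "m = mdelta M x \<oplus> n"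
    by (auto simp: qcoset_eq_iff mem_qcoset_iff)
  with x cycle have "mdelta M n = \<zero>"
    by (simp add: mdelta_add)
  with sub n obtain y where y: "y \<in> N" "n = mdelta M y"
    unfolding dg_acyclic_def by auto
  with n x have "m = mdelta M (x \<oplus> y)" "x \<oplus> y \<in> carrier M"
    by (simp_all add: mdelta_add)
  then show "\<exists>x\<in>carrier M. m = mdelta M x"
    by blast
qed

end

section \<open>Composition series\<close>

lemma dg_alg_grading_subset: "dg_alg R alg A Agr d \<Longrightarrow> Agr i \<subseteq> carrier A"
  by (simp add: dg_alg_def graded_alg_def additive_subgroup.a_subset)

lemma dg_alg_d_closed: "dg_alg R alg A Agr d \<Longrightarrow> a \<in> carrier A \<Longrightarrow> d a \<in> carrier A"
  by (auto simp: dg_alg_def)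

lemma regular_dgmod_diff_group:
  assumes dga: "dg_alg R alg A Agr d"
  shows "diff_group (regular_dgmod A Agr d)"
proof -
  from dga interpret A: ring A
    by (simp add: dg_alg_def graded_alg_def)
  have "abelian_group (regular_dgmod A Agr d)"
  proof (rule abelian_groupI)
    fix x assume "x \<in> carrier (regular_dgmod A Agr d)"
    then have "\<ominus>\<^bsub>A\<^esub> x \<in> carrier A \<and> \<ominus>\<^bsub>A\<^esub> x \<oplus>\<^bsub>A\<^esub> x = \<zero>\<^bsub>A\<^esub>"
      by (simp add: regular_dgmod_def A.l_neg)
    then show "\<exists>y\<in>carrier (regular_dgmod A Agr d).
        y \<oplus>\<^bsub>regular_dgmod A Agr d\<^esub> x = \<zero>\<^bsub>regular_dgmod A Agr d\<^esub>"
      by (auto simp: regular_dgmod_def)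
  qed (auto simp: regular_dgmod_def A.a_ac)
  with dga show ?thesis
    unfolding diff_group_def diff_group_axioms_def
    by (auto simp: dg_alg_def regular_dgmod_def)
qed

lemma finite_dg_length_acyclic:
  fixes M :: "('a, 'm) dgmod"
  assumes simple_acyclic: "\<And>S :: ('a, 'm) dgmod. dg_simple A Agr d S \<Longrightarrow> dg_acyclic S"
    and grading: "\<And>i. Agr i \<subseteq> carrier A" and d_closed: "\<And>a. a \<in> carrier A \<Longrightarrow> d a \<in> carrier A"
    and M: "diff_group M" and length: "finite_dg_length A Agr d M"
  shows "dg_acyclic M"
proof -
  interpret diff_group M by (rule M)
  from length obtain n Ms where Ms0: "Ms 0 = {\<zero>\<^bsub>M\<^esub>}" and Msn: "Ms n = carrier M"
    and sub: "\<forall>i \<le> n. dg_submod A M (Ms i)"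
    and steps: "\<forall>i < n. Ms i \<subseteq> Ms (Suc i)
                   \<and> dg_simple A Agr d (dg_quotient (dg_restrict M (Ms (Suc i))) (Ms i))"
    unfolding finite_dg_length_def by blast
  have "dg_acyclic (dg_restrict M (Ms i))" if "i \<le> n" for i
    using that
  proof (induction i)
    case 0
    show ?case
      using Ms0 by (simp add: dg_acyclic_def)
  next
    case (Suc i)
    let ?M' = "dg_restrict M (Ms (Suc i))"
    let ?Q = "dg_quotient ?M' (Ms i)"
    from Suc.prems steps have chain: "Ms i \<subseteq> Ms (Suc i)" and Q_simple: "dg_simple A Agr d ?Q"
      by simp_all
    from Suc.prems sub have "dg_submod A M (Ms (Suc i))" "dg_submod A M (Ms i)"
      by simp_all
    then have "diff_subgroup M (Ms (Suc i))" "diff_subgroup M (Ms i)"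
      by (auto intro: dg_submod_diff_subgroup)
    then interpret MN: diff_subgroup ?M' "Ms i"
      using chain by (intro diff_subgroup.restrict_diff_subgroup)
    from Q_simple have "dg_module A Agr d ?Q"
      by (simp add: dg_simple_def)
    then interpret Q: dg_transport A Agr d ?Q qrep "qcoset ?M' (Ms i)"
      using MN.quotient_qrep(2) grading d_closed by unfold_locales
    have "dg_acyclic (dg_restrict ?M' (Ms i))"
      using Suc.IH Suc.prems chain by (simp add: dg_restrict_dg_restrict)
    moreover have "dg_acyclic ?Q"
      using simple_acyclic[OF Q.transport_dg_simple[OF Q_simple]] by (simp add: Q.transport_acyclic_iff)
    ultimately show ?case
      by (rule MN.acyclic_extension)
  qed
  then have "dg_acyclic (dg_restrict M (carrier M))"
    using Msn by (metis order_refl)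
  then show ?thesis
    by (simp add: dg_acyclic_def)
qed

theorem theorem3p9:
  fixes R :: "'r ring" and A :: "'a ring" and alg :: "'r \<Rightarrow> 'a"
    and Agr :: "int \<Rightarrow> 'a set" and d :: "'a \<Rightarrow> 'a"
  assumes dga: "dg_alg R alg A Agr d"
    and simple_acyclic_m: "\<forall>S :: ('a, 'm) dgmod. dg_simple A Agr d S \<longrightarrow> dg_acyclic S"
    and simple_acyclic_a: "\<forall>S :: ('a, 'a) dgmod. dg_simple A Agr d S \<longrightarrow> dg_acyclic S"
  shows "(\<forall>M :: ('a, 'm) dgmod. dg_module A Agr d M \<and> finite_dg_length A Agr d M \<longrightarrow> dg_acyclic M)
         \<and> (finite_dg_length A Agr d (regular_dgmod A Agr d) \<longrightarrow> dg_acyclic (regular_dgmod A Agr d))"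
proof -
  have grading: "\<And>i. Agr i \<subseteq> carrier A" and d_closed: "\<And>a. a \<in> carrier A \<Longrightarrow> d a \<in> carrier A"
    using dga by (simp_all add: dg_alg_grading_subset dg_alg_d_closed)
  note main = finite_dg_length_acyclic[where A = A and Agr = Agr and d = d, OF _ grading d_closed]
  show ?thesis
  proof (intro conjI allI impI)
    fix M :: "('a, 'm) dgmod"
    assume "dg_module A Agr d M \<and> finite_dg_length A Agr d M"
    then show "dg_acyclic M"
      using main simple_acyclic_m dg_module_diff_group by blast
  next
    assume "finite_dg_length A Agr d (regular_dgmod A Agr d)"
    then show "dg_acyclic (regular_dgmod A Agr d)"
      using main simple_acyclic_a regular_dgmod_diff_group[OF dga] by blast
  qed
qed
end
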